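(* With the notation below, let $D\in\mathrm{Div}(C_p)$ and let $f\in\mathcal K(C_p)$ be real-valued. (i) Put $D'=D+(f)$. For every integer $n\geq0$ with $\|f\|_p\leq p^n$, the map $\xi\mapsto\xi-f$ induces a bijection from $H^0(D)^{p^n}$ onto $H^0(D')^{p^n}$ (which is an isomorphism of $\mathbb{R}_{\max}$-modules). (ii) For every integer $n\geq0$, the map $F_{p^n}:\xi\mapsto p^n\xi$ is a bijection $H^0(D)^{p^n}\to H^0(p^nD)^1$ which is an isomorphism of $\mathbb{R}_{\max}$-modules twisted by the automorphism $x\mapsto p^nx$ of $\mathbb{R}_{\max}$ (i.e. it preserves $\vee$ and $F_{p^n}(\xi+a)=F_{p^n}(\xi)+p^na$), and it preserves the topological dimension.
   Context: Let $p$ be a prime, $H_p=\mathbb{Z}[1/p]$, $|\cdot|_p$ the $p$-adic absolute value with $|p|_p=1/p$. $\mathbb{R}_{\max}=\mathbb{R}\cup\{-\infty\}$ with operations $\max$ and $+$. $C_p$ is the set of subgroups $H=\lambda H_p\subset\mathbb{R}$, $\lambda>0$. $\mathcal K(C_p)$: continuous piecewise affine $f:(0,\infty)\to\mathbb{R}$ with slopes in $H_p$ and $f(p\lambda)=f(\lambda)$, plus the constant $-\infty$. For real-valued $f$ and $H=\lambda H_p$, $\mathrm{Ord}_H(f)=h_+-h_-$, $h_\pm=\lim_{\epsilon\to0\pm}(f((1+\epsilon)\lambda)-f(\lambda))/\epsilon$; $(f)(H)=\mathrm{Ord}_H(f)$. Divisors: maps $D$ with $D(H)\in H$, finitely supported,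 ordered pointwise, group $\mathrm{Div}(C_p)$. $H^0(D)=\{f\in\mathcal K(C_p)\text{ real-valued}\mid D+(f)\geq0\}\cup\{-\infty\}$, an $\mathbb{R}_{\max}$-module via max and addition of constants, topologized by $d(f,g)=\max_{x\in[1,p]}|f(x)-g(x)|$. $\|f\|_p=\max\{|h|_p/\lambda\}$ over $\lambda>0$ and $h$ the left/right slopes of $f$ at $\lambda$; $H^0(D)^\rho=\{f\in H^0(D)\mid\|f\|_p\leq\rho\}$ (containing $-\infty$). Topological dimension is the Lebesgue covering dimension. *)

theory Defs
  imports "HOL-Analysis.Analysis" "HOL-Computational_Algebra.Primes"
begin

definition Hp :: "nat \<Rightarrow> real set" where
  "Hp p = {of_int k / real p ^ m | k m. True}"

definition padic_abs :: "nat \<Rightarrow> real \<Rightarrow> real" where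
  "padic_abs p x = (if x = 0 then 0 else
     (SOME r. \<exists>k::int. \<exists>m::nat. k \<noteq> 0 \<and> x = of_int k / real p ^ m \<and>
        r = real p powr (real m - real (multiplicity (int p) k))))"

text \<open>C_p: the subgroups lambda H_p of R, lambda > 0 (points are subsets of R).\<close>
definition Cp :: "nat \<Rightarrow> real set set" where
  "Cp p = {(\<lambda>h. l * h) ` Hp p | l. l > 0}"

definition rep :: "nat \<Rightarrow> real set \<Rightarrow> real" where
  "rep p H = (SOME l. l > 0 \<and> H = (\<lambda>h. l * h) ` Hp p)"

definition pw_affine_Hp :: "nat \<Rightarrow> (real \<Rightarrow> real) \<Rightarrow> bool" where
  "pw_affine_Hp p f \<longleftrightarrow>
     continuous_on {0<..} f \<and>
     (\<forall>a b. 0 < a \<and> a < b \<longrightarrow>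
        (\<exists>xs::real list. sorted_wrt (<) xs \<and> xs \<noteq> [] \<and> hd xs = a \<and> last xs = b \<and>
           (\<forall>i. Suc i < length xs \<longrightarrow>
              (\<exists>s\<in>Hp p. \<exists>c. \<forall>x\<in>{xs ! i .. xs ! Suc i}. f x = s * x + c))))"

text \<open>Real-valued elements of K(C_p). Only the values on (0,oo) matter.\<close>
definition KCp :: "nat \<Rightarrow> (real \<Rightarrow> real) set" where
  "KCp p = {f. pw_affine_Hp p f \<and> (\<forall>x>0. f (real p * x) = f x)}"

text \<open>Ord_H(f) = h_+ - h_-.\<close>
definition Ord :: "nat \<Rightarrow> real set \<Rightarrow> (real \<Rightarrow> real) \<Rightarrow> real" where
  "Ord p H f = (let l = rep p H in
     Lim (at_right 0) (\<lambda>e. (f ((1 + e) * l) - f l) / e)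
   - Lim (at_left 0) (\<lambda>e. (f ((1 + e) * l) - f l) / e))"

text \<open>Principal divisor (f); divisors are maps real set => real, zero off C_p.\<close>
definition princ :: "nat \<Rightarrow> (real \<Rightarrow> real) \<Rightarrow> real set \<Rightarrow> real" where
  "princ p f H = (if H \<in> Cp p then Ord p H f else 0)"

definition is_Div :: "nat \<Rightarrow> (real set \<Rightarrow> real) \<Rightarrow> bool" where
  "is_Div p D \<longleftrightarrow> (\<forall>H. D H \<noteq> 0 \<longrightarrow> H \<in> Cp p) \<and> (\<forall>H\<in>Cp p. D H \<in> H)
      \<and> finite {H. D H \<noteq> 0}"

text \<open>Embedding of a real-valued function on (0,oo) into the R_max-valued
  functions; values at x <= 0 are normalised to -oo (they carry no information).\<close>
definition emb :: "(real \<Rightarrow> real) \<Rightarrow> real \<Rightarrow> ereal" where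
  "emb g = (\<lambda>x. if 0 < x then ereal (g x) else -\<infinity>)"

definition minf :: "real \<Rightarrow> ereal" where
  "minf = (\<lambda>x. -\<infinity>)"

definition H0 :: "nat \<Rightarrow> (real set \<Rightarrow> real) \<Rightarrow> (real \<Rightarrow> ereal) set" where
  "H0 p D = {emb g | g. g \<in> KCp p \<and> (\<forall>H. D H + princ p g H \<ge> 0)} \<union> {minf}"

definition left_slope :: "(real \<Rightarrow> real) \<Rightarrow> real \<Rightarrow> real" where
  "left_slope f l = Lim (at_left l) (\<lambda>x. (f x - f l) / (x - l))"

definition right_slope :: "(real \<Rightarrow> real) \<Rightarrow> real \<Rightarrow> real" where
  "right_slope f l = Lim (at_right l) (\<lambda>x. (f x - f l) / (x - l))"

definition pnorm :: "nat \<Rightarrow> (real \<Rightarrow> real) \<Rightarrow> real" where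
  "pnorm p f = Sup {padic_abs p h / l | l h. l > 0 \<and> (h = left_slope f l \<or> h = right_slope f l)}"

definition H0rho :: "nat \<Rightarrow> (real set \<Rightarrow> real) \<Rightarrow> real \<Rightarrow> (real \<Rightarrow> ereal) set" where
  "H0rho p D \<rho> = {\<xi> \<in> H0 p D. \<xi> = minf \<or> (\<exists>g\<in>KCp p. \<xi> = emb g \<and> pnorm p g \<le> \<rho>)}"

text \<open>Topology on a set S of R_max-valued functions induced by
  d(f,g) = max_{x in [1,p]} |f x - g x| (so -oo is an isolated point).\<close>
definition topH :: "nat \<Rightarrow> (real \<Rightarrow> ereal) set \<Rightarrow> (real \<Rightarrow> ereal) topology" where
  "topH p S = topology (\<lambda>U. U \<subseteq> S \<and> (\<forall>\<xi>\<in>U. \<exists>e>0. \<forall>\<eta>\<in>S.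
       (\<xi> = \<eta> \<or> (\<forall>x\<in>{1..real p}. \<bar>\<xi> x - \<eta> x\<bar> < ereal e)) \<longrightarrow> \<eta> \<in> U))"

definition cov_dim_le :: "'a topology \<Rightarrow> nat \<Rightarrow> bool" where
  "cov_dim_le X n \<longleftrightarrow>
     (\<forall>\<U>. finite \<U> \<and> (\<forall>U\<in>\<U>. openin X U) \<and> \<Union>\<U> = topspace X \<longrightarrow>
        (\<exists>\<V>. finite \<V> \<and> (\<forall>V\<in>\<V>. openin X V) \<and> \<Union>\<V> = topspace X \<and>
             (\<forall>V\<in>\<V>. \<exists>U\<in>\<U>. V \<subseteq> U) \<and>
             (\<forall>x\<in>topspace X. card {V\<in>\<V>. x \<in> V} \<le> n + 1)))"

definition covering_dim :: "'a topology \<Rightarrow> ereal" where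
  "covering_dim X = (if topspace X = {} then -1 else Inf {ereal (real n) | n. cov_dim_le X n})"

end

(* Both maps are restrictions of bijections of R_max-valued functions (translation by -f and
   multiplication by p^n) that visibly respect max and the action of R_max, so the content is that
   they map the spaces onto each other.  One-sided slopes of elements of K(C_p) lie in Z[1/p], and
   the order (g)(H) at H = lambda H_p is lambda times the jump of the slope of g at lambda, hence
   linear in g, so D + (g) >= 0 iff (D + (f)) + (g - f) >= 0.  The bound ||g - f||_p <= p^n follows from the ultrametric inequality
   for |.|_p on slopes, and multiplication by p^n divides |.|_p of every slope by p^n.  The scaling
   multiplies the distance on [1, p] by p^n, so it is a homeomorphism and preserves covering
   dimension.  The one analytic point is that the supremum defining ||g||_p is finite: periodicity
   gives |h(p lambda)|_p / (p lambda) = |h(lambda)|_p / lambda for the slopes h, and on the compact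
   interval [1, p] the slopes are locally constant. *)

theory Submission
  imports Defs
begin

section \<open>The ring Z[1/p] and its p-adic absolute value\<close>

lemma Hp_memI: "of_int k / real p ^ m \<in> Hp p"
  unfolding Hp_def by blast

lemma Hp_memE:
  assumes "x \<in> Hp p"
  obtains k m where "x = of_int k / real p ^ m"
  using assms unfolding Hp_def by blast

lemma Hp_common_denominator:
  assumes "p > 0" "x \<in> Hp p" "y \<in> Hp p"
  obtains k k' m where "x = of_int k / real p ^ m" "y = of_int k' / real p ^ m"
proof -
  obtain k m where x: "x = of_int k / real p ^ m" using assms(2) by (rule Hp_memE)
  obtain k' m' where y: "y = of_int k' / real p ^ m'" using assms(3) by (rule Hp_memE)
  have "x = of_int (k * int p ^ m') / real p ^ (m + m')"
       "y = of_int (k' * int p ^ m) / real p ^ (m + m')"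
    using assms(1) by (simp_all add: x y power_add)
  then show ?thesis using that by blast
qed

lemma Hp_add:
  assumes "p > 0" "x \<in> Hp p" "y \<in> Hp p"
  shows "x + y \<in> Hp p"
proof -
  obtain k k' m where "x = of_int k / real p ^ m" "y = of_int k' / real p ^ m"
    using assms by (rule Hp_common_denominator)
  then have "x + y = of_int (k + k') / real p ^ m" by (simp add: add_divide_distrib)
  then show ?thesis by (simp only: Hp_memI)
qed

lemma Hp_mult:
  assumes "x \<in> Hp p" "y \<in> Hp p"
  shows "x * y \<in> Hp p"
proof -
  obtain k m where "x = of_int k / real p ^ m" using assms(1) by (rule Hp_memE)
  moreover obtain k' m' where "y = of_int k' / real p ^ m'" using assms(2) by (rule Hp_memE)
  ultimately have "x * y = of_int (k * k') / real p ^ (m + m')" by (simp add: power_add)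
  then show ?thesis by (simp only: Hp_memI)
qed

lemma Hp_of_int: "of_int k \<in> Hp p"
  using Hp_memI[of k p 0] by simp

lemma Hp_power: "real p ^ n \<in> Hp p"
  using Hp_of_int[of "int p ^ n" p] by simp

lemma Hp_inverse_power: "1 / real p ^ n \<in> Hp p"
  using Hp_memI[of 1 p n] by simp

abbreviation vp :: "nat \<Rightarrow> int \<Rightarrow> nat" where
  "vp p k \<equiv> multiplicity (int p) k"

lemma vp_fraction_invariant:
  assumes p: "prime p" and k: "k \<noteq> 0" "k' \<noteq> 0"
    and eq: "of_int k / real p ^ m = of_int k' / real p ^ m'"
  shows "real m - real (vp p k) = real m' - real (vp p k')"
proof -
  have pe: "prime_elem (int p)" using p by (simp add: prime_nat_int_transfer)
  have vp_shift: "vp p (j * int p ^ n) = vp p j + n" if "j \<noteq> 0" for j n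
    using pe that p prime_gt_0_nat by (simp add: prime_elem_multiplicity_mult_distrib)
  have "real_of_int (k * int p ^ m') = real_of_int (k' * int p ^ m)"
    using eq p prime_gt_0_nat by (simp add: field_simps)
  then have "vp p (k * int p ^ m') = vp p (k' * int p ^ m)" by (simp only: of_int_eq_iff)
  then have "vp p k + m' = vp p k' + m" by (simp only: vp_shift[OF k(1)] vp_shift[OF k(2)])
  then show ?thesis by linarith
qed

(* The choice in padic_abs_def is harmless: all representations k / p^m give the same value. *)
lemma padic_abs_fraction:
  assumes p: "prime p" and k: "k \<noteq> 0"
  shows "padic_abs p (of_int k / real p ^ m) = real p powr (real m - real (vp p k))"
proof -
  define x where "x = of_int k / real p ^ m"
  let ?P = "\<lambda>r. \<exists>k::int. \<exists>m::nat. k \<noteq> 0 \<and> x = of_int k / real p ^ m \<and>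
        r = real p powr (real m - real (vp p k))"
  have "\<exists>r. ?P r" using k x_def by blast
  from someI_ex[OF this] obtain k' m' where k': "k' \<noteq> 0" "x = of_int k' / real p ^ m'"
     "(SOME r. ?P r) = real p powr (real m' - real (vp p k'))"
    by blast
  moreover have "x \<noteq> 0" using k p prime_gt_0_nat by (simp add: x_def)
  moreover have "real m' - real (vp p k') = real m - real (vp p k)"
    using vp_fraction_invariant[OF p k'(1) k] k'(2) x_def by simp
  ultimately show ?thesis unfolding padic_abs_def x_def[symmetric] by simp
qed

lemma padic_abs_nonneg:
  assumes "prime p" "x \<in> Hp p"
  shows "padic_abs p x \<ge> 0"
proof -
  obtain k m where x: "x = of_int k / real p ^ m" using assms(2) by (rule Hp_memE)
  show ?thesis
  proof (cases "k = 0")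
    case False
    then show ?thesis by (simp add: x padic_abs_fraction[OF assms(1)])
  qed (simp add: x padic_abs_def)
qed

lemma padic_abs_mult:
  assumes p: "prime p" and xy: "x \<in> Hp p" "y \<in> Hp p"
  shows "padic_abs p (x * y) = padic_abs p x * padic_abs p y"
proof -
  obtain k m where x: "x = of_int k / real p ^ m" using xy(1) by (rule Hp_memE)
  obtain k' m' where y: "y = of_int k' / real p ^ m'" using xy(2) by (rule Hp_memE)
  show ?thesis
  proof (cases "k = 0 \<or> k' = 0")
    case True
    then have "x = 0 \<or> y = 0" by (auto simp: x y)
    then show ?thesis by (auto simp: padic_abs_def)
  next
    case False
    have "prime_elem (int p)" using p by (simp add: prime_nat_int_transfer)
    then have vp: "vp p (k * k') = vp p k + vp p k'"
      using False by (simp add: prime_elem_multiplicity_mult_distrib)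
    have "x * y = of_int (k * k') / real p ^ (m + m')" by (simp add: x y power_add)
    then have "padic_abs p (x * y) = real p powr (real (m + m') - real (vp p (k * k')))"
      using padic_abs_fraction[OF p, of "k * k'" "m + m'"] False by simp
    also have "\<dots> = real p powr (real m - real (vp p k)) * real p powr (real m' - real (vp p k'))"
      unfolding vp powr_add[symmetric] by (simp add: algebra_simps)
    finally show ?thesis using False by (simp add: x y padic_abs_fraction[OF p])
  qed
qed

lemma padic_abs_uminus:
  assumes "prime p" "x \<in> Hp p"
  shows "padic_abs p (- x) = padic_abs p x"
proof -
  obtain k m where x: "x = of_int k / real p ^ m" using assms(2) by (rule Hp_memE)
  have "vp p (- k) = vp p (normalize (- k))" by (rule multiplicity_normalize_right[symmetric])
  also have "normalize (- k) = normalize k" by simp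
  also have "vp p (normalize k) = vp p k" by (rule multiplicity_normalize_right)
  finally have "vp p (- k) = vp p k" .
  have neg: "- x = of_int (- k) / real p ^ m" by (simp add: x)
  show ?thesis
  proof (cases "k = 0")
    case False
    have "padic_abs p (- x) = real p powr (real m - real (vp p (- k)))"
      unfolding neg by (rule padic_abs_fraction[OF assms(1)]) (simp add: False)
    then show ?thesis using False \<open>vp p (- k) = vp p k\<close> by (simp add: x padic_abs_fraction[OF assms(1)])
  qed (simp add: x padic_abs_def)
qed

lemma padic_abs_power: "prime p \<Longrightarrow> padic_abs p (real p ^ n) = 1 / real p ^ n"
  using padic_abs_fraction[of p "int p ^ n" 0]
  by (simp add: prime_gt_0_nat prime_nat_int_transfer multiplicity_prime_power powr_minus
      powr_realpow divide_inverse)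

lemma padic_abs_inverse_power: "prime p \<Longrightarrow> padic_abs p (1 / real p ^ n) = real p ^ n"
  using padic_abs_fraction[of p 1 n] by (simp add: prime_gt_0_nat powr_realpow)

lemma padic_abs_ultrametric:
  assumes p: "prime p" and xy: "x \<in> Hp p" "y \<in> Hp p"
  shows "padic_abs p (x + y) \<le> max (padic_abs p x) (padic_abs p y)"
proof -
  obtain k k' m where x: "x = of_int k / real p ^ m" and y: "y = of_int k' / real p ^ m"
    using prime_gt_0_nat[OF p] xy by (rule Hp_common_denominator)
  have s: "x + y = of_int (k + k') / real p ^ m" by (simp add: x y add_divide_distrib)
  show ?thesis
  proof (cases "k = 0 \<or> k' = 0 \<or> k + k' = 0")
    case True
    then show ?thesis
    proof (elim disjE)
      assume "k + k' = 0"
      then show ?thesis using padic_abs_nonneg[OF p xy(1)] by (simp add: s padic_abs_def)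
    qed (simp_all add: x y)
  next
    case False
    define j where "j = min (vp p k) (vp p k')"
    have "\<not> is_unit (int p)" using prime_gt_1_nat[OF p] by simp
    moreover have "int p ^ j dvd k + k'"
      unfolding j_def by (intro dvd_add multiplicity_dvd') simp_all
    ultimately have "j \<le> vp p (k + k')" using False multiplicity_geI by blast
    have p1: "real p > 1" using prime_gt_1_nat[OF p] by simp
    have "padic_abs p (x + y) = real p powr (real m - real (vp p (k + k')))"
      unfolding s by (rule padic_abs_fraction[OF p]) (use False in simp)
    also have "\<dots> \<le> real p powr (real m - real j)"
      using \<open>j \<le> vp p (k + k')\<close> p1 by (intro powr_mono) auto
    also have "\<dots> = max (real p powr (real m - real (vp p k))) (real p powr (real m - real (vp p k')))"
      using p1 by (cases "vp p k \<le> vp p k'") (simp_all add: j_def max_def min_def)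
    also have "\<dots> = max (padic_abs p x) (padic_abs p y)"
      using False by (simp add: x y padic_abs_fraction[OF p])
    finally show ?thesis .
  qed
qed

section \<open>Piecewise affine functions with slopes in Z[1/p]\<close>

definition Hp_affine_on :: "nat \<Rightarrow> (real \<Rightarrow> real) \<Rightarrow> real set \<Rightarrow> bool" where
  "Hp_affine_on p g S \<longleftrightarrow> (\<exists>s\<in>Hp p. \<exists>c. \<forall>x\<in>S. g x = s * x + c)"

lemma Hp_affine_on_subset: "Hp_affine_on p g T \<Longrightarrow> S \<subseteq> T \<Longrightarrow> Hp_affine_on p g S"
  unfolding Hp_affine_on_def by blast

lemma Hp_affine_on_lincomb:
  assumes "p > 0" "a \<in> Hp p" "b \<in> Hp p" "Hp_affine_on p g S" "Hp_affine_on p f S"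
  shows "Hp_affine_on p (\<lambda>x. a * g x + b * f x) S"
proof -
  obtain s c where s: "s \<in> Hp p" "\<forall>x\<in>S. g x = s * x + c"
    using assms(4) unfolding Hp_affine_on_def by blast
  obtain t d where t: "t \<in> Hp p" "\<forall>x\<in>S. f x = t * x + d"
    using assms(5) unfolding Hp_affine_on_def by blast
  have "a * s + b * t \<in> Hp p" using assms(1-3) s(1) t(1) by (intro Hp_add Hp_mult)
  moreover have "\<forall>x\<in>S. a * g x + b * f x = (a * s + b * t) * x + (a * c + b * d)"
    using s(2) t(2) by (simp add: algebra_simps)
  ultimately show ?thesis unfolding Hp_affine_on_def by blast
qed

definition Hp_partition :: "nat \<Rightarrow> (real \<Rightarrow> real) \<Rightarrow> real list \<Rightarrow> real \<Rightarrow> real \<Rightarrow> bool" where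
  "Hp_partition p g xs a b \<longleftrightarrow> sorted_wrt (<) xs \<and> xs \<noteq> [] \<and> hd xs = a \<and> last xs = b \<and>
     (\<forall>i. Suc i < length xs \<longrightarrow> Hp_affine_on p g {xs ! i .. xs ! Suc i})"

lemma pw_affine_Hp_iff_partitions:
  "pw_affine_Hp p g \<longleftrightarrow> continuous_on {0<..} g \<and>
     (\<forall>a b. 0 < a \<and> a < b \<longrightarrow> (\<exists>xs. Hp_partition p g xs a b))"
  unfolding pw_affine_Hp_def Hp_partition_def Hp_affine_on_def ..

lemma sorted_wrt_less_set_bounds:
  fixes xs :: "'a::linorder list"
  assumes "sorted_wrt (<) xs" "xs \<noteq> []"
  shows "set xs \<subseteq> {hd xs .. last xs}"
proof
  fix x assume "x \<in> set xs"
  then obtain j where j: "j < length xs" "x = xs ! j" by (auto simp: in_set_conv_nth)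
  have "sorted xs" using assms(1) by (rule strict_sorted_imp_sorted)
  then have "xs ! 0 \<le> xs ! j" "xs ! j \<le> xs ! (length xs - 1)"
    using j(1) by (auto intro: sorted_nth_mono)
  then show "x \<in> {hd xs .. last xs}" using assms(2) j(2) by (simp add: hd_conv_nth last_conv_nth)
qed

lemma sorted_wrt_less_segment:
  fixes xs :: "'a::linorder list"
  assumes "sorted_wrt (<) xs" "xs \<noteq> []" "hd xs < y" "y \<le> last xs"
  shows "\<exists>i. Suc i < length xs \<and> xs ! i < y \<and> y \<le> xs ! Suc i"
  using assms
proof (induction xs)
  case (Cons x ys)
  then have "ys \<noteq> []" by (auto dest: leD)
  show ?case
  proof (cases "y \<le> hd ys")
    case True
    then show ?thesis using Cons.prems \<open>ys \<noteq> []\<close> by (intro exI[of _ 0]) (simp add: hd_conv_nth)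
  next
    case False
    then have "hd ys < y" by simp
    then obtain i where "Suc i < length ys" "ys ! i < y" "y \<le> ys ! Suc i"
      using Cons.IH Cons.prems \<open>ys \<noteq> []\<close> by auto
    then show ?thesis by (intro exI[of _ "Suc i"]) simp
  qed
qed simp

lemma sorted_wrt_less_consecutive_gap:
  fixes xs :: "'a::linorder list"
  assumes "sorted_wrt (<) xs" "Suc i < length xs"
  shows "{xs ! i <..< xs ! Suc i} \<inter> set xs = {}"
proof -
  have mono: "j \<le> k \<Longrightarrow> k < length xs \<Longrightarrow> xs ! j \<le> xs ! k" for j k
    using strict_sorted_imp_sorted[OF assms(1)] by (rule sorted_nth_mono)
  have "\<not> (xs ! i < xs ! j \<and> xs ! j < xs ! Suc i)" if "j < length xs" for j
    using mono[of j i] mono[of "Suc i" j] assms(2) that by (cases "j \<le> i") auto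
  then show ?thesis by (auto simp: in_set_conv_nth)
qed

lemma Hp_partition_set_bounds:
  assumes "Hp_partition p g xs a b"
  shows "set xs \<subseteq> {a..b}" "a \<in> set xs" "b \<in> set xs"
  using assms sorted_wrt_less_set_bounds[of xs] hd_in_set[of xs] last_in_set[of xs]
  unfolding Hp_partition_def by auto

lemma Hp_partition_affine_on_gap:
  assumes P: "Hp_partition p g xs a b" and uv: "a \<le> u" "u < v" "v \<le> b"
    and gap: "{u<..<v} \<inter> set xs = {}"
  shows "Hp_affine_on p g {u..v}"
proof -
  obtain i where i: "Suc i < length xs" "xs ! i < v" "v \<le> xs ! Suc i"
    using sorted_wrt_less_segment[of xs v] P uv unfolding Hp_partition_def by fastforce
  have "xs ! i \<in> set xs" using i(1) by simp
  then have "xs ! i \<notin> {u<..<v}" using gap by blast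
  then have "xs ! i \<le> u" using i(2) by auto
  moreover have "Hp_affine_on p g {xs ! i .. xs ! Suc i}" using P i(1) unfolding Hp_partition_def by blast
  ultimately show ?thesis using i(3) by (elim Hp_affine_on_subset) auto
qed

lemma Hp_partition_lincomb:
  assumes p: "p > 0" and ab: "\<alpha> \<in> Hp p" "\<beta> \<in> Hp p"
    and g: "Hp_partition p g xs a b" and f: "Hp_partition p f ys a b"
  shows "Hp_partition p (\<lambda>x. \<alpha> * g x + \<beta> * f x) (sorted_list_of_set (set xs \<union> set ys)) a b"
proof -
  define zs where "zs = sorted_list_of_set (set xs \<union> set ys)"
  have sw: "sorted_wrt (<) zs" unfolding zs_def by (rule strict_sorted_list_of_set)
  have set_zs: "set zs = set xs \<union> set ys" unfolding zs_def by simp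
  have zs_ab: "set zs \<subseteq> {a..b}" "a \<in> set zs" "b \<in> set zs"
    using Hp_partition_set_bounds[OF g] Hp_partition_set_bounds[OF f] set_zs by auto
  then have ne: "zs \<noteq> []" by auto
  have "hd zs = a" "last zs = b"
    using zs_ab sorted_wrt_less_set_bounds[OF sw ne] hd_in_set[OF ne] last_in_set[OF ne]
    by fastforce+
  moreover have "Hp_affine_on p (\<lambda>x. \<alpha> * g x + \<beta> * f x) {zs ! i .. zs ! Suc i}"
    if i: "Suc i < length zs" for i
  proof -
    have "zs ! i \<in> set zs" "zs ! Suc i \<in> set zs" using i by simp_all
    then have bounds: "a \<le> zs ! i" "zs ! Suc i \<le> b" using zs_ab by auto
    have less: "zs ! i < zs ! Suc i" using sw i by (simp add: sorted_wrt_nth_less)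
    have gap: "{zs ! i <..< zs ! Suc i} \<inter> (set xs \<union> set ys) = {}"
      using sorted_wrt_less_consecutive_gap[OF sw i] set_zs by simp
    show ?thesis
      using Hp_partition_affine_on_gap[OF g bounds(1) less bounds(2)]
        Hp_partition_affine_on_gap[OF f bounds(1) less bounds(2)] gap
      by (intro Hp_affine_on_lincomb[OF p ab]) auto
  qed
  ultimately show ?thesis using sw ne unfolding Hp_partition_def zs_def by blast
qed

lemma KCp_lincomb:
  assumes p: "prime p" and ab: "\<alpha> \<in> Hp p" "\<beta> \<in> Hp p" and g: "g \<in> KCp p" and f: "f \<in> KCp p"
  shows "(\<lambda>x. \<alpha> * g x + \<beta> * f x) \<in> KCp p"
proof -
  have pw: "pw_affine_Hp p g" "pw_affine_Hp p f" using g f unfolding KCp_def by auto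
  have "pw_affine_Hp p (\<lambda>x. \<alpha> * g x + \<beta> * f x)"
    unfolding pw_affine_Hp_iff_partitions
  proof (intro conjI allI impI)
    show "continuous_on {0<..} (\<lambda>x. \<alpha> * g x + \<beta> * f x)"
      using pw unfolding pw_affine_Hp_def by (intro continuous_intros) auto
    fix a b :: real assume "0 < a \<and> a < b"
    then obtain xs ys where "Hp_partition p g xs a b" "Hp_partition p f ys a b"
      using pw unfolding pw_affine_Hp_iff_partitions by blast
    then show "\<exists>zs. Hp_partition p (\<lambda>x. \<alpha> * g x + \<beta> * f x) zs a b"
      using Hp_partition_lincomb[OF prime_gt_0_nat[OF p] ab] by blast
  qed
  then show ?thesis using g f unfolding KCp_def by simp
qed

lemma finite_nearest_below:
  fixes P :: "real set"
  assumes "finite P" "a \<in> P" "a < l"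
  obtains u where "u \<in> P" "u < l" "{u<..<l} \<inter> P = {}"
proof -
  define u where "u = Max {x\<in>P. x < l}"
  have "u \<in> {x\<in>P. x < l}" unfolding u_def using assms by (intro Max_in) auto
  moreover have "y \<le> u" if "y \<in> P" "y < l" for y
    unfolding u_def using assms that by (intro Max_ge) auto
  ultimately show ?thesis using that by force
qed

lemma finite_nearest_above:
  fixes P :: "real set"
  assumes "finite P" "b \<in> P" "l < b"
  obtains v where "v \<in> P" "l < v" "{l<..<v} \<inter> P = {}"
proof -
  define v where "v = Min {x\<in>P. l < x}"
  have "v \<in> {x\<in>P. l < x}" unfolding v_def using assms by (intro Min_in) auto
  moreover have "v \<le> y" if "y \<in> P" "l < y" for y
    unfolding v_def using assms that by (intro Min_le) auto
  ultimately show ?thesis using that by force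
qed

lemma pw_affine_Hp_locally_left:
  assumes "pw_affine_Hp p g" "0 < l"
  obtains u where "0 < u" "u < l" "Hp_affine_on p g {u..l}"
proof -
  obtain xs where P: "Hp_partition p g xs (l / 2) (2 * l)"
    using assms unfolding pw_affine_Hp_iff_partitions by fastforce
  note bounds = Hp_partition_set_bounds[OF P]
  have "l / 2 < l" using assms(2) by simp
  then obtain u where u: "u \<in> set xs" "u < l" "{u<..<l} \<inter> set xs = {}"
    by (rule finite_nearest_below[OF finite_set bounds(2)])
  have "l / 2 \<le> u" using u(1) bounds(1) by auto
  then have "0 < u" "Hp_affine_on p g {u..l}"
    using Hp_partition_affine_on_gap[OF P _ u(2) _ u(3)] assms(2) by simp_all
  then show ?thesis using that u(2) by blast
qed

lemma pw_affine_Hp_locally_right: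
  assumes "pw_affine_Hp p g" "0 < l"
  obtains v where "l < v" "Hp_affine_on p g {l..v}"
proof -
  obtain xs where P: "Hp_partition p g xs (l / 2) (2 * l)"
    using assms unfolding pw_affine_Hp_iff_partitions by fastforce
  note bounds = Hp_partition_set_bounds[OF P]
  have "l < 2 * l" using assms(2) by simp
  then obtain v where v: "v \<in> set xs" "l < v" "{l<..<v} \<inter> set xs = {}"
    by (rule finite_nearest_above[OF finite_set bounds(3)])
  have "v \<le> 2 * l" using v(1) bounds(1) by auto
  then have "Hp_affine_on p g {l..v}"
    using Hp_partition_affine_on_gap[OF P _ v(2) _ v(3)] assms(2) by simp
  then show ?thesis using that v(2) by simp
qed

section \<open>One-sided slopes, orders and the p-adic norm\<close>

lemma left_slope_affine:
  assumes "u < l" "\<forall>x\<in>{u..l}. g x = s * x + c"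
  shows "left_slope g l = s"
proof -
  have "\<forall>\<^sub>F x in at_left l. (g x - g l) / (x - l) = s"
    using eventually_at_left_real[OF assms(1)]
  proof (rule eventually_mono)
    fix x assume "x \<in> {u<..<l}"
    then show "(g x - g l) / (x - l) = s" using assms(2) by (simp add: field_simps)
  qed
  then have "((\<lambda>x. (g x - g l) / (x - l)) \<longlongrightarrow> s) (at_left l)" by (rule tendsto_eventually)
  then show ?thesis unfolding left_slope_def by (simp add: tendsto_Lim)
qed

lemma right_slope_affine:
  assumes "l < v" "\<forall>x\<in>{l..v}. g x = s * x + c"
  shows "right_slope g l = s"
proof -
  have "\<forall>\<^sub>F x in at_right l. (g x - g l) / (x - l) = s"
    using eventually_at_right_real[OF assms(1)]
  proof (rule eventually_mono)
    fix x assume "x \<in> {l<..<v}"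
    then show "(g x - g l) / (x - l) = s" using assms(2) by (simp add: field_simps)
  qed
  then have "((\<lambda>x. (g x - g l) / (x - l)) \<longlongrightarrow> s) (at_right l)" by (rule tendsto_eventually)
  then show ?thesis unfolding right_slope_def by (simp add: tendsto_Lim)
qed

lemma pw_affine_Hp_left_slope:
  assumes "pw_affine_Hp p g" "0 < l"
  obtains u c where "0 < u" "u < l" "\<forall>x\<in>{u..l}. g x = left_slope g l * x + c"
    "left_slope g l \<in> Hp p"
proof -
  obtain u where u: "0 < u" "u < l" "Hp_affine_on p g {u..l}"
    using assms by (rule pw_affine_Hp_locally_left)
  then obtain s c where "s \<in> Hp p" "\<forall>x\<in>{u..l}. g x = s * x + c"
    unfolding Hp_affine_on_def by blast
  moreover have "left_slope g l = s" using left_slope_affine u(2) calculation(2) .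
  ultimately show ?thesis using that u(1,2) by blast
qed

lemma pw_affine_Hp_right_slope:
  assumes "pw_affine_Hp p g" "0 < l"
  obtains v c where "l < v" "\<forall>x\<in>{l..v}. g x = right_slope g l * x + c"
    "right_slope g l \<in> Hp p"
proof -
  obtain v where v: "l < v" "Hp_affine_on p g {l..v}"
    using assms by (rule pw_affine_Hp_locally_right)
  then obtain s c where "s \<in> Hp p" "\<forall>x\<in>{l..v}. g x = s * x + c"
    unfolding Hp_affine_on_def by blast
  moreover have "right_slope g l = s" using right_slope_affine v(1) calculation(2) .
  ultimately show ?thesis using that v(1) by blast
qed

lemma left_slope_Hp: "pw_affine_Hp p g \<Longrightarrow> 0 < l \<Longrightarrow> left_slope g l \<in> Hp p"
  by (erule pw_affine_Hp_left_slope)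

lemma right_slope_Hp: "pw_affine_Hp p g \<Longrightarrow> 0 < l \<Longrightarrow> right_slope g l \<in> Hp p"
  by (erule pw_affine_Hp_right_slope)

lemma KCp_pw_affine_Hp: "g \<in> KCp p \<Longrightarrow> pw_affine_Hp p g"
  unfolding KCp_def by simp

lemma KCp_periodic: "g \<in> KCp p \<Longrightarrow> 0 < x \<Longrightarrow> g (real p * x) = g x"
  unfolding KCp_def by simp

lemma left_slope_lincomb:
  assumes "pw_affine_Hp p g" "pw_affine_Hp p f" "0 < l"
  shows "left_slope (\<lambda>x. a * g x + b * f x) l = a * left_slope g l + b * left_slope f l"
proof -
  obtain u c where g: "0 < u" "u < l" "\<forall>x\<in>{u..l}. g x = left_slope g l * x + c"
    "left_slope g l \<in> Hp p"
    using assms(1,3) by (rule pw_affine_Hp_left_slope)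
  obtain u' c' where f: "0 < u'" "u' < l" "\<forall>x\<in>{u'..l}. f x = left_slope f l * x + c'"
    "left_slope f l \<in> Hp p"
    using assms(2,3) by (rule pw_affine_Hp_left_slope)
  have "\<forall>x\<in>{max u u'..l}.
      a * g x + b * f x = (a * left_slope g l + b * left_slope f l) * x + (a * c + b * c')"
    using g(3) f(3) by (simp add: algebra_simps)
  then show ?thesis using g(2) f(2) by (intro left_slope_affine) simp_all
qed

lemma right_slope_lincomb:
  assumes "pw_affine_Hp p g" "pw_affine_Hp p f" "0 < l"
  shows "right_slope (\<lambda>x. a * g x + b * f x) l = a * right_slope g l + b * right_slope f l"
proof -
  obtain v c where g: "l < v" "\<forall>x\<in>{l..v}. g x = right_slope g l * x + c"
    "right_slope g l \<in> Hp p"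
    using assms(1,3) by (rule pw_affine_Hp_right_slope)
  obtain v' c' where f: "l < v'" "\<forall>x\<in>{l..v'}. f x = right_slope f l * x + c'"
    "right_slope f l \<in> Hp p"
    using assms(2,3) by (rule pw_affine_Hp_right_slope)
  have "\<forall>x\<in>{l..min v v'}.
      a * g x + b * f x = (a * right_slope g l + b * right_slope f l) * x + (a * c + b * c')"
    using g(2) f(2) by (simp add: algebra_simps)
  then show ?thesis using g(1) f(1) by (intro right_slope_affine) simp_all
qed

lemma slopes_cong:
  assumes "pw_affine_Hp p g" "0 < l" "\<forall>x>0. h x = g x"
  shows "left_slope h l = left_slope g l" "right_slope h l = right_slope g l"
proof -
  obtain u c where u: "0 < u" "u < l" "\<forall>x\<in>{u..l}. g x = left_slope g l * x + c"
    "left_slope g l \<in> Hp p"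
    using assms(1,2) by (rule pw_affine_Hp_left_slope)
  then have "\<forall>x\<in>{u..l}. h x = left_slope g l * x + c" using assms(3) by auto
  then show "left_slope h l = left_slope g l" by (rule left_slope_affine[OF u(2)])
  obtain v c' where v: "l < v" "\<forall>x\<in>{l..v}. g x = right_slope g l * x + c'"
    "right_slope g l \<in> Hp p"
    using assms(1,2) by (rule pw_affine_Hp_right_slope)
  then have "\<forall>x\<in>{l..v}. h x = right_slope g l * x + c'" using assms(2,3) by auto
  then show "right_slope h l = right_slope g l" by (rule right_slope_affine[OF v(1)])
qed

lemma rep_pos: "H \<in> Cp p \<Longrightarrow> 0 < rep p H"
  unfolding Cp_def rep_def by (auto intro: someI2_ex)

lemma multiplicative_quotient_tendsto_right:
  fixes g :: "real \<Rightarrow> real"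
  assumes "0 < l" "l < v" "\<forall>x\<in>{l..v}. g x = s * x + c"
  shows "((\<lambda>e. (g ((1 + e) * l) - g l) / e) \<longlongrightarrow> s * l) (at_right 0)"
proof (rule tendsto_eventually)
  show "\<forall>\<^sub>F e in at_right 0. (g ((1 + e) * l) - g l) / e = s * l"
    using eventually_at_right_real[of 0 "(v - l) / l"]
  proof (rule eventually_mono)
    fix e assume e: "e \<in> {0<..<(v - l) / l}"
    then have "(1 + e) * l \<in> {l..v}" using assms(1) by (simp add: field_simps)
    then have "g ((1 + e) * l) = s * ((1 + e) * l) + c" "g l = s * l + c" using assms by auto
    then show "(g ((1 + e) * l) - g l) / e = s * l" using e by (simp add: field_simps)
  qed (use assms in simp)
qed

lemma multiplicative_quotient_tendsto_left:
  fixes g :: "real \<Rightarrow> real"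
  assumes "0 < l" "u < l" "\<forall>x\<in>{u..l}. g x = s * x + c"
  shows "((\<lambda>e. (g ((1 + e) * l) - g l) / e) \<longlongrightarrow> s * l) (at_left 0)"
proof (rule tendsto_eventually)
  show "\<forall>\<^sub>F e in at_left 0. (g ((1 + e) * l) - g l) / e = s * l"
    using eventually_at_left_real[of "- ((l - u) / l)" 0]
  proof (rule eventually_mono)
    fix e assume e: "e \<in> {- ((l - u) / l)<..<0}"
    then have "e * l < 0" "u < (1 + e) * l" using assms(1) by (simp_all add: mult_neg_pos field_simps)
    then have "(1 + e) * l \<in> {u..l}" by (simp add: algebra_simps)
    then have "g ((1 + e) * l) = s * ((1 + e) * l) + c" "g l = s * l + c" using assms by auto
    then show "(g ((1 + e) * l) - g l) / e = s * l" using e by (simp add: field_simps)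
  qed (use assms in simp)
qed

(* Ord differentiates in the variable e of (1 + e) * rep p H, hence the factor rep p H. *)
lemma Ord_eq_slopes:
  assumes "pw_affine_Hp p g" "H \<in> Cp p"
  shows "Ord p H g = rep p H * (right_slope g (rep p H) - left_slope g (rep p H))"
proof -
  define l where "l = rep p H"
  have l: "0 < l" unfolding l_def using assms(2) by (rule rep_pos)
  obtain u c where u: "0 < u" "u < l" "\<forall>x\<in>{u..l}. g x = left_slope g l * x + c"
    "left_slope g l \<in> Hp p"
    using assms(1) l by (rule pw_affine_Hp_left_slope)
  obtain v c' where v: "l < v" "\<forall>x\<in>{l..v}. g x = right_slope g l * x + c'"
    "right_slope g l \<in> Hp p"
    using assms(1) l by (rule pw_affine_Hp_right_slope)
  show ?thesis
    using tendsto_Lim[OF _ multiplicative_quotient_tendsto_right[OF l v(1,2)]]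
      tendsto_Lim[OF _ multiplicative_quotient_tendsto_left[OF l u(2,3)]]
    unfolding Ord_def Let_def l_def[symmetric] by (simp add: algebra_simps)
qed

lemma princ_eq_slopes:
  "pw_affine_Hp p g \<Longrightarrow> princ p g H =
     (if H \<in> Cp p then rep p H * (right_slope g (rep p H) - left_slope g (rep p H)) else 0)"
  by (simp add: princ_def Ord_eq_slopes)

lemma princ_lincomb:
  assumes "prime p" "a \<in> Hp p" "b \<in> Hp p" "g \<in> KCp p" "f \<in> KCp p"
  shows "princ p (\<lambda>x. a * g x + b * f x) H = a * princ p g H + b * princ p f H"
proof -
  note pw = KCp_pw_affine_Hp[OF assms(4)] KCp_pw_affine_Hp[OF assms(5)]
  show ?thesis
    using KCp_pw_affine_Hp[OF KCp_lincomb[OF assms]] rep_pos[of H p]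
      left_slope_lincomb[OF pw] right_slope_lincomb[OF pw]
    by (cases "H \<in> Cp p") (simp_all add: pw princ_eq_slopes algebra_simps)
qed

lemma princ_cong:
  assumes "g \<in> KCp p" "h \<in> KCp p" "\<forall>x>0. h x = g x"
  shows "princ p h H = princ p g H"
proof (cases "H \<in> Cp p")
  case True
  note pw = KCp_pw_affine_Hp[OF assms(1)] KCp_pw_affine_Hp[OF assms(2)]
  have "left_slope h (rep p H) = left_slope g (rep p H)"
    "right_slope h (rep p H) = right_slope g (rep p H)"
    using slopes_cong[OF pw(1) rep_pos[OF True] assms(3)] by simp_all
  then show ?thesis by (simp only: princ_eq_slopes[OF pw(1)] princ_eq_slopes[OF pw(2)])
qed (simp add: princ_def)

lemma left_slope_mult_p:
  assumes "g \<in> KCp p" "p > 0" "0 < l"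
  shows "left_slope g (real p * l) = left_slope g l / real p"
proof -
  obtain u c where u: "0 < u" "u < l" "\<forall>x\<in>{u..l}. g x = left_slope g l * x + c"
    "left_slope g l \<in> Hp p"
    using KCp_pw_affine_Hp[OF assms(1)] assms(3) by (rule pw_affine_Hp_left_slope)
  have "g x = left_slope g l / real p * x + c" if "x \<in> {real p * u..real p * l}" for x
  proof -
    have "x / real p \<in> {u..l}" using that assms(2) by (auto simp: field_simps)
    then have "g (real p * (x / real p)) = left_slope g l * (x / real p) + c"
      using u(1,3) KCp_periodic[OF assms(1), of "x / real p"] by auto
    then show ?thesis using assms(2) by simp
  qed
  then show ?thesis by (intro left_slope_affine[of "real p * u"]) (use u(2) assms(2) in auto)
qed

lemma right_slope_mult_p:
  assumes "g \<in> KCp p" "p > 0" "0 < l"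
  shows "right_slope g (real p * l) = right_slope g l / real p"
proof -
  obtain v c where v: "l < v" "\<forall>x\<in>{l..v}. g x = right_slope g l * x + c"
    "right_slope g l \<in> Hp p"
    using KCp_pw_affine_Hp[OF assms(1)] assms(3) by (rule pw_affine_Hp_right_slope)
  have "g x = right_slope g l / real p * x + c" if "x \<in> {real p * l..real p * v}" for x
  proof -
    have "x / real p \<in> {l..v}" using that assms(2) by (auto simp: field_simps)
    then have "g (real p * (x / real p)) = right_slope g l * (x / real p) + c"
      using v(2) assms(3) KCp_periodic[OF assms(1), of "x / real p"] by auto
    then show ?thesis using assms(2) by simp
  qed
  then show ?thesis by (intro right_slope_affine[of _ "real p * v"]) (use v(1) assms(2) in auto)
qed

lemma one_sided_slopes_nearby:
  assumes "pw_affine_Hp p g" "0 < m"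
  obtains d where "0 < d"
    "\<And>x. dist x m < d \<Longrightarrow> {left_slope g x, right_slope g x} \<subseteq> {left_slope g m, right_slope g m}"
proof -
  obtain u c where u: "0 < u" "u < m" "\<forall>x\<in>{u..m}. g x = left_slope g m * x + c"
    "left_slope g m \<in> Hp p"
    using assms by (rule pw_affine_Hp_left_slope)
  obtain v c' where v: "m < v" "\<forall>x\<in>{m..v}. g x = right_slope g m * x + c'"
    "right_slope g m \<in> Hp p"
    using assms by (rule pw_affine_Hp_right_slope)
  have "{left_slope g x, right_slope g x} \<subseteq> {left_slope g m, right_slope g m}"
    if x: "dist x m < min (m - u) (v - m)" for x
  proof (cases x m rule: linorder_cases)
    case less
    then have "u < x" using x by (simp add: dist_real_def)
    then have "left_slope g x = left_slope g m" "right_slope g x = left_slope g m"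
      using u(3) less by (auto intro!: left_slope_affine[of u] right_slope_affine[of x m])
    then show ?thesis by simp
  next
    case greater
    then have "x < v" using x by (simp add: dist_real_def)
    then have "left_slope g x = right_slope g m" "right_slope g x = right_slope g m"
      using v(2) greater by (auto intro!: left_slope_affine[of m] right_slope_affine[of x v])
    then show ?thesis by simp
  qed simp
  moreover have "0 < min (m - u) (v - m)" using u(2) v(1) by simp
  ultimately show ?thesis using that by blast
qed

lemma compact_bounded_if_locally_dominated:
  fixes \<phi> :: "'a::metric_space \<Rightarrow> real"
  assumes "compact K" and dom: "\<And>m. m \<in> K \<Longrightarrow> \<exists>d>0. \<forall>x\<in>K. dist x m < d \<longrightarrow> \<phi> x \<le> \<phi> m"
  obtains B where "\<And>x. x \<in> K \<Longrightarrow> \<phi> x \<le> B"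
proof -
  obtain d where d: "\<And>m. m \<in> K \<Longrightarrow> 0 < d m \<and> (\<forall>x\<in>K. dist x m < d m \<longrightarrow> \<phi> x \<le> \<phi> m)"
    using dom by metis
  have "K \<subseteq> \<Union> ((\<lambda>m. ball m (d m)) ` K)" using d by force
  then obtain C where C: "C \<subseteq> K" "finite C" "K \<subseteq> \<Union> ((\<lambda>m. ball m (d m)) ` C)"
    using compactE_image[OF assms(1), of K "\<lambda>m. ball m (d m)"] by blast
  have "\<phi> x \<le> Max (\<phi> ` C)" if x: "x \<in> K" for x
  proof -
    obtain m where "m \<in> C" "dist m x < d m" using C(3) x by auto
    then have "\<phi> x \<le> \<phi> m" using d C(1) x by (force simp: dist_commute)
    also have "\<dots> \<le> Max (\<phi> ` C)" using C(2) \<open>m \<in> C\<close> by simp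
    finally show ?thesis .
  qed
  then show ?thesis using that by blast
qed

lemma exists_power_scaling_into_interval:
  fixes q l :: real
  assumes "1 < q" "0 < l"
  obtains k :: nat and m where "m \<in> {1..q}" "l = q ^ k * m \<or> m = q ^ k * l"
proof -
  define j where "j = \<lfloor>log q l\<rfloor>"
  have j: "q powr j \<le> l" "l < q powr j * q"
    using floor_log_eq_powr_iff[OF assms(2,1), of j] j_def assms(1) by (simp_all add: powr_add)
  define m where "m = l / q powr j"
  have m: "m \<in> {1..q}" using j assms by (simp add: m_def field_simps)
  show ?thesis
  proof (cases "0 \<le> j")
    case True
    then have "l = q ^ nat j * m" using assms by (simp add: m_def powr_real_of_int)
    then show ?thesis using that m by blast
  next
    case False
    then have "m = q ^ nat (- j) * l" using assms by (simp add: m_def powr_real_of_int divide_inverse)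
    then show ?thesis using that m by blast
  qed
qed

definition slope_weight :: "nat \<Rightarrow> (real \<Rightarrow> real) \<Rightarrow> real \<Rightarrow> real" where
  "slope_weight p g l = max (padic_abs p (left_slope g l)) (padic_abs p (right_slope g l)) / l"

lemma padic_abs_divide_p: "prime p \<Longrightarrow> x \<in> Hp p \<Longrightarrow> padic_abs p (x / real p) = real p * padic_abs p x"
  using padic_abs_mult[OF _ _ Hp_inverse_power[of p 1]] padic_abs_inverse_power[of p 1] by simp

lemma slope_weight_mult_p:
  assumes p: "prime p" and g: "g \<in> KCp p" and l: "0 < l"
  shows "slope_weight p g (real p * l) = slope_weight p g l"
proof -
  have p0: "p > 0" using p by (rule prime_gt_0_nat)
  note pw = KCp_pw_affine_Hp[OF g]
  have "padic_abs p (left_slope g (real p * l)) = real p * padic_abs p (left_slope g l)"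
    "padic_abs p (right_slope g (real p * l)) = real p * padic_abs p (right_slope g l)"
    using left_slope_mult_p[OF g p0 l] right_slope_mult_p[OF g p0 l]
      padic_abs_divide_p[OF p left_slope_Hp[OF pw l]] padic_abs_divide_p[OF p right_slope_Hp[OF pw l]]
    by simp_all
  moreover have "max (real p * a) (real p * b) = real p * max a b" for a b
    by (simp add: max_mult_distrib_left)
  ultimately show ?thesis using p0 by (simp add: slope_weight_def)
qed

lemma slope_weight_mult_power:
  assumes "prime p" "g \<in> KCp p" "0 < l"
  shows "slope_weight p g (real p ^ k * l) = slope_weight p g l"
proof (induction k)
  case (Suc k)
  have "0 < real p ^ k * l" using assms prime_gt_0_nat by simp
  then show ?case using slope_weight_mult_p[OF assms(1,2)] Suc by (simp add: mult.assoc)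
qed simp

lemma slope_weight_bounded:
  assumes p: "prime p" and g: "g \<in> KCp p"
  obtains M where "\<And>l. 0 < l \<Longrightarrow> slope_weight p g l \<le> M"
proof -
  note pw = KCp_pw_affine_Hp[OF g]
  define N where "N l = max (padic_abs p (left_slope g l)) (padic_abs p (right_slope g l))" for l
  have p1: "1 < real p" using prime_gt_1_nat[OF p] by simp
  have "\<exists>d>0. \<forall>x\<in>{1..real p}. dist x m < d \<longrightarrow> N x \<le> N m" if "m \<in> {1..real p}" for m
  proof -
    have "0 < m" using that by simp
    then obtain d where "0 < d"
      "\<And>x. dist x m < d \<Longrightarrow> {left_slope g x, right_slope g x} \<subseteq> {left_slope g m, right_slope g m}"
      using one_sided_slopes_nearby[OF pw] by blast
    then have "N x \<le> N m" if "dist x m < d" for x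
      using that unfolding N_def by (force simp: le_max_iff_disj)
    then show ?thesis using \<open>0 < d\<close> by blast
  qed
  then obtain B where B: "\<And>x. x \<in> {1..real p} \<Longrightarrow> N x \<le> B"
    using compact_bounded_if_locally_dominated[OF compact_Icc] by blast
  have "slope_weight p g l \<le> B" if l: "0 < l" for l
  proof -
    obtain k m where m: "m \<in> {1..real p}" "l = real p ^ k * m \<or> m = real p ^ k * l"
      using p1 l by (rule exists_power_scaling_into_interval)
    then have "slope_weight p g l = slope_weight p g m"
      using slope_weight_mult_power[OF p g] l by auto
    also have "\<dots> = N m / m" unfolding slope_weight_def N_def ..
    also have "\<dots> \<le> N m / 1"
      using m(1) padic_abs_nonneg[OF p left_slope_Hp[OF pw]]
      by (intro divide_left_mono) (auto simp: N_def le_max_iff_disj)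
    also have "\<dots> \<le> B" using B m(1) by simp
    finally show ?thesis .
  qed
  then show ?thesis using that by blast
qed

lemma pnorm_le_iff:
  assumes p: "prime p" and g: "g \<in> KCp p"
  shows "pnorm p g \<le> r \<longleftrightarrow> (\<forall>l>0. slope_weight p g l \<le> r)"
proof -
  define S where "S = {padic_abs p h / l | l h. l > 0 \<and> (h = left_slope g l \<or> h = right_slope g l)}"
  have weight_le: "slope_weight p g l \<le> r \<longleftrightarrow>
      padic_abs p (left_slope g l) / l \<le> r \<and> padic_abs p (right_slope g l) / l \<le> r"
    if "0 < l" for l r
    using that by (simp add: slope_weight_def max_divide_distrib_right)
  have "(\<forall>x\<in>S. x \<le> r) \<longleftrightarrow>
      (\<forall>l>0. padic_abs p (left_slope g l) / l \<le> r \<and> padic_abs p (right_slope g l) / l \<le> r)" for r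
    unfolding S_def by blast
  then have S_le: "(\<forall>x\<in>S. x \<le> r) \<longleftrightarrow> (\<forall>l>0. slope_weight p g l \<le> r)" for r
    by (simp add: weight_le)
  obtain M where "\<And>l. 0 < l \<Longrightarrow> slope_weight p g l \<le> M"
    using slope_weight_bounded[OF p g] by blast
  then have bdd: "bdd_above S" using S_le[of M] by (auto simp: bdd_above_def)
  have "padic_abs p (left_slope g 1) / 1 \<in> S"
    unfolding S_def by (intro CollectI exI[of _ 1] exI[of _ "left_slope g 1"]) simp
  then have "S \<noteq> {}" by blast
  then have "pnorm p g \<le> r \<longleftrightarrow> (\<forall>x\<in>S. x \<le> r)"
    unfolding pnorm_def S_def[symmetric] using bdd by (rule cSup_le_iff)
  then show ?thesis using S_le by simp
qed

section \<open>The spaces H^0(D)^rho\<close>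

lemma Hp_one: "1 \<in> Hp p"
  using Hp_of_int[of 1] by simp

lemma KCp_add: "prime p \<Longrightarrow> g \<in> KCp p \<Longrightarrow> f \<in> KCp p \<Longrightarrow> (\<lambda>x. g x + f x) \<in> KCp p"
  using KCp_lincomb[OF _ Hp_one Hp_one] by simp

lemma KCp_scale: "prime p \<Longrightarrow> c \<in> Hp p \<Longrightarrow> g \<in> KCp p \<Longrightarrow> (\<lambda>x. c * g x) \<in> KCp p"
  using KCp_lincomb[OF _ _ Hp_of_int[of 0], of p c g g] by simp

lemma KCp_uminus: "prime p \<Longrightarrow> f \<in> KCp p \<Longrightarrow> (\<lambda>x. - f x) \<in> KCp p"
  using KCp_scale[OF _ Hp_of_int[of "-1"]] by simp

lemma princ_add:
  "prime p \<Longrightarrow> g \<in> KCp p \<Longrightarrow> f \<in> KCp p \<Longrightarrow> princ p (\<lambda>x. g x + f x) H = princ p g H + princ p f H"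
  using princ_lincomb[OF _ Hp_one Hp_one] by simp

lemma princ_scale:
  "prime p \<Longrightarrow> c \<in> Hp p \<Longrightarrow> g \<in> KCp p \<Longrightarrow> princ p (\<lambda>x. c * g x) H = c * princ p g H"
  using princ_lincomb[OF _ _ Hp_of_int[of 0], of p c g g] by simp

lemma princ_uminus: "prime p \<Longrightarrow> f \<in> KCp p \<Longrightarrow> princ p (\<lambda>x. - f x) H = - princ p f H"
  using princ_scale[OF _ Hp_of_int[of "-1"]] by simp

lemma slope_weight_add_le:
  assumes p: "prime p" and g: "pw_affine_Hp p g" and f: "pw_affine_Hp p f" and l: "0 < l"
  shows "slope_weight p (\<lambda>x. g x + f x) l \<le> max (slope_weight p g l) (slope_weight p f l)"
proof -
  have "left_slope (\<lambda>x. g x + f x) l = left_slope g l + left_slope f l"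
    "right_slope (\<lambda>x. g x + f x) l = right_slope g l + right_slope f l"
    using left_slope_lincomb[OF g f l, of 1 1] right_slope_lincomb[OF g f l, of 1 1] by simp_all
  moreover have
    "padic_abs p (left_slope g l + left_slope f l)
       \<le> max (padic_abs p (left_slope g l)) (padic_abs p (left_slope f l))"
    "padic_abs p (right_slope g l + right_slope f l)
       \<le> max (padic_abs p (right_slope g l)) (padic_abs p (right_slope f l))"
    using left_slope_Hp[OF g l] left_slope_Hp[OF f l] right_slope_Hp[OF g l] right_slope_Hp[OF f l]
    by (simp_all add: padic_abs_ultrametric[OF p])
  ultimately have "max (padic_abs p (left_slope (\<lambda>x. g x + f x) l))
      (padic_abs p (right_slope (\<lambda>x. g x + f x) l))
    \<le> max (max (padic_abs p (left_slope g l)) (padic_abs p (right_slope g l)))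
        (max (padic_abs p (left_slope f l)) (padic_abs p (right_slope f l)))"
    by (smt (verit) max_def)
  then have "slope_weight p (\<lambda>x. g x + f x) l
      \<le> max (max (padic_abs p (left_slope g l)) (padic_abs p (right_slope g l)))
        (max (padic_abs p (left_slope f l)) (padic_abs p (right_slope f l))) / l"
    unfolding slope_weight_def using l by (intro divide_right_mono) simp_all
  also have "\<dots> = max (slope_weight p g l) (slope_weight p f l)"
    using l by (simp add: slope_weight_def max_divide_distrib_right)
  finally show ?thesis .
qed

lemma slope_weight_uminus:
  assumes p: "prime p" and f: "pw_affine_Hp p f" and l: "0 < l"
  shows "slope_weight p (\<lambda>x. - f x) l = slope_weight p f l"
  using left_slope_lincomb[OF f f l, of "-1" 0] right_slope_lincomb[OF f f l, of "-1" 0]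
    padic_abs_uminus[OF p left_slope_Hp[OF f l]] padic_abs_uminus[OF p right_slope_Hp[OF f l]]
  by (simp add: slope_weight_def)

lemma slope_weight_scale:
  assumes p: "prime p" and c: "c \<in> Hp p" and g: "pw_affine_Hp p g" and l: "0 < l"
  shows "slope_weight p (\<lambda>x. c * g x) l = padic_abs p c * slope_weight p g l"
proof -
  have "left_slope (\<lambda>x. c * g x) l = c * left_slope g l"
    "right_slope (\<lambda>x. c * g x) l = c * right_slope g l"
    using left_slope_lincomb[OF g g l, of c 0] right_slope_lincomb[OF g g l, of c 0] by simp_all
  then show ?thesis
    using padic_abs_mult[OF p c left_slope_Hp[OF g l]] padic_abs_mult[OF p c right_slope_Hp[OF g l]]
      padic_abs_nonneg[OF p c]
    by (simp add: slope_weight_def max_mult_distrib_left)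
qed

lemma pnorm_add_le:
  assumes p: "prime p" and g: "g \<in> KCp p" "pnorm p g \<le> r" and f: "f \<in> KCp p" "pnorm p f \<le> r"
  shows "pnorm p (\<lambda>x. g x + f x) \<le> r"
  unfolding pnorm_le_iff[OF p KCp_add[OF p g(1) f(1)]]
proof (intro allI impI)
  fix l :: real assume l: "0 < l"
  have "slope_weight p g l \<le> r" "slope_weight p f l \<le> r"
    using g f l by (simp_all add: pnorm_le_iff[OF p])
  then show "slope_weight p (\<lambda>x. g x + f x) l \<le> r"
    using slope_weight_add_le[OF p KCp_pw_affine_Hp[OF g(1)] KCp_pw_affine_Hp[OF f(1)] l] by simp
qed

lemma pnorm_uminus_le:
  assumes p: "prime p" and f: "f \<in> KCp p" "pnorm p f \<le> r"
  shows "pnorm p (\<lambda>x. - f x) \<le> r"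
  using f slope_weight_uminus[OF p KCp_pw_affine_Hp[OF f(1)]]
  by (simp add: pnorm_le_iff[OF p] KCp_uminus[OF p])

lemma pnorm_scale_le:
  assumes p: "prime p" and c: "c \<in> Hp p" and g: "g \<in> KCp p" "pnorm p g \<le> r"
  shows "pnorm p (\<lambda>x. c * g x) \<le> padic_abs p c * r"
  using g slope_weight_scale[OF p c KCp_pw_affine_Hp[OF g(1)]] padic_abs_nonneg[OF p c]
  by (simp add: pnorm_le_iff[OF p] KCp_scale[OF p c] mult_left_mono)

lemma emb_eq_imp_eq_on_pos: "emb g = emb h \<Longrightarrow> \<forall>x>0. h x = g x"
  unfolding emb_def by (metis ereal.inject)

lemma H0rho_iff:
  "\<xi> \<in> H0rho p D r \<longleftrightarrow>
     \<xi> = minf \<or> (\<exists>g\<in>KCp p. \<xi> = emb g \<and> (\<forall>H. 0 \<le> D H + princ p g H) \<and> pnorm p g \<le> r)"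
proof
  assume "\<xi> \<in> H0rho p D r"
  then have H0: "\<xi> \<in> H0 p D" and "\<xi> = minf \<or> (\<exists>g\<in>KCp p. \<xi> = emb g \<and> pnorm p g \<le> r)"
    unfolding H0rho_def by auto
  moreover have "\<forall>H. 0 \<le> D H + princ p g H"
    if g: "g \<in> KCp p" "\<xi> = emb g" "\<xi> \<noteq> minf" for g
  proof -
    obtain g0 where g0: "g0 \<in> KCp p" "\<xi> = emb g0" "\<forall>H. 0 \<le> D H + princ p g0 H"
      using H0 g(3) unfolding H0_def by blast
    have "princ p g H = princ p g0 H" for H
      using princ_cong[OF g0(1) g(1)] emb_eq_imp_eq_on_pos g(2) g0(2) by metis
    then show ?thesis using g0(3) by simp
  qed
  ultimately show "\<xi> = minf \<or> (\<exists>g\<in>KCp p. \<xi> = emb g \<and> (\<forall>H. 0 \<le> D H + princ p g H) \<and> pnorm p g \<le> r)"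
    by blast
qed (auto simp: H0rho_def H0_def)

lemma H0rho_shift:
  assumes p: "prime p" and f: "f \<in> KCp p" "pnorm p f \<le> r" and \<xi>: "\<xi> \<in> H0rho p D r"
  shows "(\<lambda>x. \<xi> x + ereal (f x)) \<in> H0rho p (\<lambda>H. D H - princ p f H) r"
proof -
  from \<xi>[unfolded H0rho_iff] show ?thesis
  proof (elim disjE bexE conjE)
  assume "\<xi> = minf"
  then show ?thesis by (simp add: H0rho_iff minf_def)
next
  fix g assume g: "g \<in> KCp p" "\<xi> = emb g" "\<forall>H. 0 \<le> D H + princ p g H" "pnorm p g \<le> r"
  have "(\<lambda>x. \<xi> x + ereal (f x)) = emb (\<lambda>x. g x + f x)" using g(2) by (auto simp: emb_def)
  moreover have "\<forall>H. 0 \<le> (D H - princ p f H) + princ p (\<lambda>x. g x + f x) H"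
    using g(3) by (simp add: princ_add[OF p g(1) f(1)])
  moreover note KCp_add[OF p g(1) f(1)] pnorm_add_le[OF p g(1,4) f]
  ultimately show ?thesis unfolding H0rho_iff by blast
  qed
qed

lemma H0rho_scale:
  assumes p: "prime p" and c: "c \<in> Hp p" "0 < c" and \<xi>: "\<xi> \<in> H0rho p D r"
  shows "(\<lambda>x. ereal c * \<xi> x) \<in> H0rho p (\<lambda>H. c * D H) (padic_abs p c * r)"
proof -
  from \<xi>[unfolded H0rho_iff] show ?thesis
  proof (elim disjE bexE conjE)
  assume "\<xi> = minf"
  then show ?thesis using c(2) by (simp add: H0rho_iff minf_def)
next
  fix g assume g: "g \<in> KCp p" "\<xi> = emb g" "\<forall>H. 0 \<le> D H + princ p g H" "pnorm p g \<le> r"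
  have "(\<lambda>x. ereal c * \<xi> x) = emb (\<lambda>x. c * g x)" using g(2) c(2) by (auto simp: emb_def)
  moreover have "\<forall>H. 0 \<le> c * D H + princ p (\<lambda>x. c * g x) H"
    using g(3) c(2) by (simp add: princ_scale[OF p c(1) g(1)] distrib_left[symmetric])
  moreover note KCp_scale[OF p c(1) g(1)] pnorm_scale_le[OF p c(1) g(1,4)]
  ultimately show ?thesis unfolding H0rho_iff by blast
  qed
qed

lemma bij_betw_H0rho_translate:
  assumes p: "prime p" and f: "f \<in> KCp p" "pnorm p f \<le> r"
  shows "bij_betw (\<lambda>\<xi> x. \<xi> x - ereal (f x)) (H0rho p D r) (H0rho p (\<lambda>H. D H + princ p f H) r)"
proof (rule bij_betw_byWitness[where f' = "\<lambda>\<xi> x. \<xi> x + ereal (f x)"])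
  have minus_as_plus: "\<xi> x - ereal (f x) = \<xi> x + ereal (- f x)" for \<xi> :: "real \<Rightarrow> ereal" and x
    by (simp add: minus_ereal_def)
  show "(\<lambda>\<xi> x. \<xi> x - ereal (f x)) ` H0rho p D r \<subseteq> H0rho p (\<lambda>H. D H + princ p f H) r"
    using H0rho_shift[OF p KCp_uminus[OF p f(1)] pnorm_uminus_le[OF p f]]
    by (auto simp: minus_as_plus princ_uminus[OF p f(1)])
  show "(\<lambda>\<xi> x. \<xi> x + ereal (f x)) ` H0rho p (\<lambda>H. D H + princ p f H) r \<subseteq> H0rho p D r"
    using H0rho_shift[OF p f, of _ "\<lambda>H. D H + princ p f H"] by auto
  have "a - ereal (f x) + ereal (f x) = a" "a + ereal (f x) - ereal (f x) = a" for a x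
    by (cases a; simp)+
  then show "\<forall>\<xi>\<in>H0rho p D r. (\<lambda>x. \<xi> x - ereal (f x) + ereal (f x)) = \<xi>"
    "\<forall>\<xi>\<in>H0rho p (\<lambda>H. D H + princ p f H) r. (\<lambda>x. \<xi> x + ereal (f x) - ereal (f x)) = \<xi>"
    by simp_all
qed

lemma bij_betw_H0rho_scale_power:
  assumes p: "prime p"
  shows "bij_betw (\<lambda>\<xi> x. ereal (real p ^ n) * \<xi> x)
    (H0rho p D (real p ^ n * r)) (H0rho p (\<lambda>H. real p ^ n * D H) r)"
proof (rule bij_betw_byWitness[where f' = "\<lambda>\<xi> x. ereal (1 / real p ^ n) * \<xi> x"])
  define c where "c = real p ^ n"
  have c: "0 < c" unfolding c_def using prime_gt_0_nat[OF p] by simp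
  show "(\<lambda>\<xi> x. ereal (real p ^ n) * \<xi> x) ` H0rho p D (real p ^ n * r)
      \<subseteq> H0rho p (\<lambda>H. real p ^ n * D H) r"
    using H0rho_scale[OF p Hp_power, of n, of _ D "real p ^ n * r"] c
    by (auto simp: padic_abs_power[OF p] c_def)
  show "(\<lambda>\<xi> x. ereal (1 / real p ^ n) * \<xi> x) ` H0rho p (\<lambda>H. real p ^ n * D H) r
      \<subseteq> H0rho p D (real p ^ n * r)"
    using H0rho_scale[OF p Hp_inverse_power, of n, of _ "\<lambda>H. real p ^ n * D H" r] c
    by (auto simp: padic_abs_inverse_power[OF p] c_def)
  have "ereal (1 / c) * (ereal c * a) = a" "ereal c * (ereal (1 / c) * a) = a" for a
    using c by (cases a; simp)+
  then show "\<forall>\<xi>\<in>H0rho p D (real p ^ n * r). (\<lambda>x. ereal (1 / real p ^ n) * (ereal (real p ^ n) * \<xi> x)) = \<xi>"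
    "\<forall>\<xi>\<in>H0rho p (\<lambda>H. real p ^ n * D H) r. (\<lambda>x. ereal (real p ^ n) * (ereal (1 / real p ^ n) * \<xi> x)) = \<xi>"
    unfolding c_def by simp_all
qed

section \<open>Topology and covering dimension\<close>

lemma istopology_neighbourhood_system:
  assumes mono: "\<And>e e' \<xi> \<eta>. e \<le> e' \<Longrightarrow> N e \<xi> \<eta> \<Longrightarrow> N e' \<xi> \<eta>"
  shows "istopology (\<lambda>U. U \<subseteq> S \<and> (\<forall>\<xi>\<in>U. \<exists>e>0. \<forall>\<eta>\<in>S. N (e::real) \<xi> \<eta> \<longrightarrow> \<eta> \<in> U))"
    (is "istopology ?L")
proof -
  have "?L (U \<inter> V)" if U: "?L U" and V: "?L V" for U V
  proof -
    have "\<exists>e>0. \<forall>\<eta>\<in>S. N e \<xi> \<eta> \<longrightarrow> \<eta> \<in> U \<inter> V" if \<xi>: "\<xi> \<in> U \<inter> V" for \<xi>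
    proof -
      from U \<xi> obtain e1 where e1: "0 < e1" "\<forall>\<eta>\<in>S. N e1 \<xi> \<eta> \<longrightarrow> \<eta> \<in> U" by blast
      from V \<xi> obtain e2 where e2: "0 < e2" "\<forall>\<eta>\<in>S. N e2 \<xi> \<eta> \<longrightarrow> \<eta> \<in> V" by blast
      have "\<eta> \<in> U \<inter> V" if "\<eta> \<in> S" "N (min e1 e2) \<xi> \<eta>" for \<eta>
        using e1(2) e2(2) mono[OF min.cobounded1 that(2)] mono[OF min.cobounded2 that(2)] that(1)
        by blast
      moreover have "0 < min e1 e2" using e1(1) e2(1) by simp
      ultimately show ?thesis by blast
    qed
    then show ?thesis using U by blast
  qed
  moreover have "?L (\<Union>K)" if "\<forall>U\<in>K. ?L U" for K
  proof -
    have "\<exists>e>0. \<forall>\<eta>\<in>S. N e \<xi> \<eta> \<longrightarrow> \<eta> \<in> \<Union>K" if "\<xi> \<in> \<Union>K" for \<xi>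
    proof -
      from that obtain U where "U \<in> K" "\<xi> \<in> U" by blast
      then obtain e where "0 < e" "\<forall>\<eta>\<in>S. N e \<xi> \<eta> \<longrightarrow> \<eta> \<in> U"
        using \<open>\<forall>U\<in>K. ?L U\<close> by blast
      then show ?thesis using \<open>U \<in> K\<close> by blast
    qed
    then show ?thesis using that by blast
  qed
  ultimately show ?thesis unfolding istopology_def by blast
qed

lemma openin_topH:
  "openin (topH p S) U \<longleftrightarrow> U \<subseteq> S \<and> (\<forall>\<xi>\<in>U. \<exists>e>0. \<forall>\<eta>\<in>S.
       (\<xi> = \<eta> \<or> (\<forall>x\<in>{1..real p}. \<bar>\<xi> x - \<eta> x\<bar> < ereal e)) \<longrightarrow> \<eta> \<in> U)"
proof -
  have "istopology (\<lambda>U. U \<subseteq> S \<and> (\<forall>\<xi>\<in>U. \<exists>e>0. \<forall>\<eta>\<in>S.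
       (\<xi> = \<eta> \<or> (\<forall>x\<in>{1..real p}. \<bar>\<xi> x - \<eta> x\<bar> < ereal e)) \<longrightarrow> \<eta> \<in> U))"
    by (rule istopology_neighbourhood_system) (auto intro: less_le_trans)
  then show ?thesis unfolding topH_def by (simp add: topology_inverse')
qed

lemma topspace_topH: "topspace (topH p S) = S"
proof -
  have "openin (topH p S) S" unfolding openin_topH by (auto intro: exI[of _ 1])
  moreover have "U \<subseteq> S" if "openin (topH p S) U" for U using that unfolding openin_topH by blast
  ultimately show ?thesis unfolding topspace_def by blast
qed

lemma continuous_map_topH_lipschitz:
  assumes maps: "F ` A \<subseteq> B" and c: "0 < c"
    and lip: "\<And>\<xi> \<eta> x. \<xi> \<in> A \<Longrightarrow> \<eta> \<in> A \<Longrightarrow> \<bar>F \<xi> x - F \<eta> x\<bar> \<le> ereal c * \<bar>\<xi> x - \<eta> x\<bar>"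
  shows "continuous_map (topH p A) (topH p B) F"
  unfolding continuous_map_def topspace_topH
proof (intro conjI allI impI)
  show "F \<in> A \<rightarrow> B" using maps by auto
  fix U assume "openin (topH p B) U"
  then have U: "\<forall>\<xi>\<in>U. \<exists>e>0. \<forall>\<eta>\<in>B.
      (\<xi> = \<eta> \<or> (\<forall>x\<in>{1..real p}. \<bar>\<xi> x - \<eta> x\<bar> < ereal e)) \<longrightarrow> \<eta> \<in> U"
    by (simp add: openin_topH)
  have "\<exists>e>0. \<forall>\<eta>\<in>A. (\<xi> = \<eta> \<or> (\<forall>x\<in>{1..real p}. \<bar>\<xi> x - \<eta> x\<bar> < ereal e)) \<longrightarrow> F \<eta> \<in> U"
    if \<xi>: "\<xi> \<in> A" "F \<xi> \<in> U" for \<xi>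
  proof -
    obtain e where e: "0 < e"
      "\<forall>\<eta>\<in>B. (F \<xi> = \<eta> \<or> (\<forall>x\<in>{1..real p}. \<bar>F \<xi> x - \<eta> x\<bar> < ereal e)) \<longrightarrow> \<eta> \<in> U"
      using U \<xi>(2) by blast
    have "F \<eta> \<in> U" if \<eta>: "\<eta> \<in> A" and x: "\<forall>x\<in>{1..real p}. \<bar>\<xi> x - \<eta> x\<bar> < ereal (e / c)" for \<eta>
    proof -
      have "\<bar>F \<xi> x - F \<eta> x\<bar> < ereal e" if "x \<in> {1..real p}" for x
      proof -
        have "ereal c * \<bar>\<xi> x - \<eta> x\<bar> < ereal c * ereal (e / c)"
          using x that c by (intro ereal_mult_strict_left_mono) auto
        then show ?thesis using lip[OF \<xi>(1) \<eta>, of x] c by simp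
      qed
      then show ?thesis using e(2) maps \<eta> by blast
    qed
    then show ?thesis using e(1) c \<xi>(2) by (intro exI[of _ "e / c"]) auto
  qed
  then show "openin (topH p A) {\<xi> \<in> A. F \<xi> \<in> U}" unfolding openin_topH by blast
qed

lemma ereal_abs_diff_scale: "0 < c \<Longrightarrow> \<bar>ereal c * a - ereal c * b\<bar> = ereal c * \<bar>a - b\<bar>"
  by (cases a; cases b) (auto simp: right_diff_distrib[symmetric] abs_mult)

lemma topH_homeomorphic_space_scale:
  assumes c: "0 < c" and bij: "bij_betw (\<lambda>\<xi> x. ereal c * \<xi> x) A B"
  shows "topH p A homeomorphic_space topH p B"
proof -
  define F where "F = (\<lambda>(\<xi> :: real \<Rightarrow> ereal) x. ereal c * \<xi> x)"
  define G where "G = (\<lambda>(\<xi> :: real \<Rightarrow> ereal) x. ereal (1 / c) * \<xi> x)"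
  have "ereal (1 / c) * (ereal c * a) = a" "ereal c * (ereal (1 / c) * a) = a" for a
    using c by (cases a; simp)+
  then have GF: "G (F \<xi>) = \<xi>" "F (G \<xi>) = \<xi>" for \<xi> unfolding F_def G_def by simp_all
  have FAB: "F ` A = B" using bij unfolding bij_betw_def F_def by simp
  then have GBA: "G ` B \<subseteq> A" using GF by auto
  have "continuous_map (topH p A) (topH p B) F"
    using FAB c by (intro continuous_map_topH_lipschitz[where c = c]) (simp_all add: F_def ereal_abs_diff_scale)
  moreover have "continuous_map (topH p B) (topH p A) G"
    using GBA c by (intro continuous_map_topH_lipschitz[where c = "1 / c"]) (simp_all add: G_def ereal_abs_diff_scale)
  ultimately have "homeomorphic_maps (topH p A) (topH p B) F G"
    unfolding homeomorphic_maps_def topspace_topH by (simp add: GF)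
  then show ?thesis unfolding homeomorphic_space_def by blast
qed

lemma continuous_map_preimage_open_cover:
  assumes f: "continuous_map X Y f" and opn: "\<forall>U\<in>\<U>. openin Y U" and cov: "\<Union>\<U> = topspace Y"
  shows "\<forall>U\<in>\<U>. openin X {x \<in> topspace X. f x \<in> U}"
    and "(\<Union>U\<in>\<U>. {x \<in> topspace X. f x \<in> U}) = topspace X"
proof -
  show "\<forall>U\<in>\<U>. openin X {x \<in> topspace X. f x \<in> U}"
    using opn openin_continuous_map_preimage[OF f] by blast
  show "(\<Union>U\<in>\<U>. {x \<in> topspace X. f x \<in> U}) = topspace X"
  proof
    show "(\<Union>U\<in>\<U>. {x \<in> topspace X. f x \<in> U}) \<subseteq> topspace X" by blast
    show "topspace X \<subseteq> (\<Union>U\<in>\<U>. {x \<in> topspace X. f x \<in> U})"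
    proof
      fix x assume x: "x \<in> topspace X"
      then have "f x \<in> topspace Y" using continuous_map_image_subset_topspace[OF f] by blast
      then obtain U where "U \<in> \<U>" "f x \<in> U" unfolding cov[symmetric] by blast
      then show "x \<in> (\<Union>U\<in>\<U>. {x \<in> topspace X. f x \<in> U})" using x by blast
    qed
  qed
qed

lemma card_images_containing_le:
  assumes "finite \<V>" "inj_on f (\<Union>\<V>)" "x \<in> \<Union>\<V>"
  shows "card {W \<in> (`) f ` \<V>. f x \<in> W} \<le> card {V \<in> \<V>. x \<in> V}"
proof -
  have "{W \<in> (`) f ` \<V>. f x \<in> W} \<subseteq> (`) f ` {V \<in> \<V>. x \<in> V}"
  proof
    fix W assume "W \<in> {W \<in> (`) f ` \<V>. f x \<in> W}"
    then obtain V x' where V: "V \<in> \<V>" "W = f ` V" "x' \<in> V" "f x = f x'" by blast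
    then have "x' = x" using assms(2,3) by (blast dest: inj_onD)
    then show "W \<in> (`) f ` {V \<in> \<V>. x \<in> V}" using V by blast
  qed
  then have "card {W \<in> (`) f ` \<V>. f x \<in> W} \<le> card ((`) f ` {V \<in> \<V>. x \<in> V})"
    using assms(1) by (intro card_mono) auto
  also have "\<dots> \<le> card {V \<in> \<V>. x \<in> V}" using assms(1) by (intro card_image_le) simp
  finally show ?thesis .
qed

lemma cov_dim_le_homeomorphic_map:
  assumes f: "homeomorphic_map X Y f" and X: "cov_dim_le X n"
  shows "cov_dim_le Y n"
  unfolding cov_dim_le_def
proof (intro allI impI, elim conjE)
  fix \<U> assume fin: "finite \<U>" and opn: "\<forall>U\<in>\<U>. openin Y U" and cov: "\<Union>\<U> = topspace Y"
  have onto: "f ` topspace X = topspace Y" and inj: "inj_on f (topspace X)"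
    using f by (simp_all add: homeomorphic_imp_surjective_map homeomorphic_imp_injective_map)
  define pre where "pre U = {x \<in> topspace X. f x \<in> U}" for U
  note pre_cover = continuous_map_preimage_open_cover[OF homeomorphic_imp_continuous_map[OF f] opn cov,
      folded pre_def]
  have "finite (pre ` \<U>) \<and> (\<forall>U\<in>pre ` \<U>. openin X U) \<and> \<Union>(pre ` \<U>) = topspace X"
    using pre_cover by (simp add: fin)
  then obtain \<V> where \<V>: "finite \<V>" "\<forall>V\<in>\<V>. openin X V" "\<Union>\<V> = topspace X"
    "\<forall>V\<in>\<V>. \<exists>U\<in>pre ` \<U>. V \<subseteq> U" "\<forall>x\<in>topspace X. card {V\<in>\<V>. x \<in> V} \<le> n + 1"
    using X unfolding cov_dim_le_def by (elim allE impE exE conjE) blast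
  have sub: "V \<subseteq> topspace X" if "V \<in> \<V>" for V using \<V>(2) that by (simp add: openin_subset)
  show "\<exists>\<W>. finite \<W> \<and> (\<forall>W\<in>\<W>. openin Y W) \<and> \<Union>\<W> = topspace Y \<and>
      (\<forall>W\<in>\<W>. \<exists>U\<in>\<U>. W \<subseteq> U) \<and> (\<forall>y\<in>topspace Y. card {W\<in>\<W>. y \<in> W} \<le> n + 1)"
  proof (intro exI[of _ "(`) f ` \<V>"] conjI ballI)
    show "finite ((`) f ` \<V>)" using \<V>(1) by simp
    show "\<Union>((`) f ` \<V>) = topspace Y" by (simp add: image_Union[symmetric] \<V>(3) onto)
  next
    fix W assume "W \<in> (`) f ` \<V>"
    then obtain V where V: "V \<in> \<V>" "W = f ` V" by blast
    show "openin Y W" using V \<V>(2) homeomorphic_map_openness[OF f sub[OF V(1)]] by simp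
    obtain U where "U \<in> \<U>" "V \<subseteq> pre U" using \<V>(4) V(1) by blast
    then show "\<exists>U\<in>\<U>. W \<subseteq> U" using V(2) unfolding pre_def by blast
  next
    fix y assume "y \<in> topspace Y"
    then obtain x where x: "x \<in> topspace X" "y = f x" unfolding onto[symmetric] by blast
    have "card {W \<in> (`) f ` \<V>. f x \<in> W} \<le> card {V \<in> \<V>. x \<in> V}"
      using card_images_containing_le[OF \<V>(1)] inj x(1) unfolding \<V>(3) by blast
    then show "card {W \<in> (`) f ` \<V>. y \<in> W} \<le> n + 1" using \<V>(5) x by fastforce
  qed
qed

lemma covering_dim_homeomorphic:
  assumes "X homeomorphic_space Y"
  shows "covering_dim X = covering_dim Y"
proof -
  obtain f g where f: "homeomorphic_map X Y f" and g: "homeomorphic_map Y X g"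
    using assms homeomorphic_space_sym[of X Y] unfolding homeomorphic_space by blast
  have "cov_dim_le X n \<longleftrightarrow> cov_dim_le Y n" for n
    using cov_dim_le_homeomorphic_map[OF f] cov_dim_le_homeomorphic_map[OF g] by blast
  moreover have "topspace X = {} \<longleftrightarrow> topspace Y = {}"
    using homeomorphic_imp_surjective_map[OF f] by blast
  ultimately show ?thesis unfolding covering_dim_def by simp
qed

lemma ereal_max_minus: "max a b - ereal r = max (a - ereal r) (b - ereal r)"
  by (cases a; cases b) (auto simp: max_def)

lemma ereal_add_minus_commute: "a \<noteq> \<infinity> \<Longrightarrow> x + a - ereal r = x - ereal r + a"
  by (cases x; cases a) auto

lemma ereal_mult_max: "0 < c \<Longrightarrow> ereal c * max a b = max (ereal c * a) (ereal c * b)"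
  by (cases a; cases b) (auto simp: max_def)

lemma ereal_mult_add: "0 < c \<Longrightarrow> a \<noteq> \<infinity> \<Longrightarrow> ereal c * (x + a) = ereal c * x + ereal c * a"
  by (cases x; cases a) (auto simp: distrib_left)

theorem lemma5p18:
  fixes p :: nat and D :: "real set \<Rightarrow> real" and f :: "real \<Rightarrow> real"
  assumes "prime p" and "is_Div p D" and "f \<in> KCp p"
  shows "(\<forall>n::nat. pnorm p f \<le> real p ^ n \<longrightarrow>
            (let \<phi> = (\<lambda>\<xi> x. \<xi> x - ereal (f x));
                 A = H0rho p D (real p ^ n) in
              bij_betw \<phi> A (H0rho p (\<lambda>H. D H + princ p f H) (real p ^ n)) \<and>
              (\<forall>\<xi>\<in>A. \<forall>\<eta>\<in>A. \<phi> (sup \<xi> \<eta>) = sup (\<phi> \<xi>) (\<phi> \<eta>)) \<and>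
              (\<forall>\<xi>\<in>A. \<forall>a::ereal. a \<noteq> \<infinity> \<longrightarrow> \<phi> (\<lambda>x. \<xi> x + a) = (\<lambda>x. \<phi> \<xi> x + a))))
       \<and> (\<forall>n::nat.
            (let F = (\<lambda>\<xi> x. ereal (real p ^ n) * \<xi> x);
                 A = H0rho p D (real p ^ n);
                 B = H0rho p (\<lambda>H. real p ^ n * D H) 1 in
              bij_betw F A B \<and>
              (\<forall>\<xi>\<in>A. \<forall>\<eta>\<in>A. F (sup \<xi> \<eta>) = sup (F \<xi>) (F \<eta>)) \<and>
              (\<forall>\<xi>\<in>A. \<forall>a::ereal. a \<noteq> \<infinity> \<longrightarrow>
                  F (\<lambda>x. \<xi> x + a) = (\<lambda>x. F \<xi> x + ereal (real p ^ n) * a)) \<and>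
              covering_dim (topH p A) = covering_dim (topH p B)))"
proof -
  have c: "0 < real p ^ n" for n using prime_gt_0_nat[OF assms(1)] by simp
  note scale_bij = bij_betw_H0rho_scale_power[OF assms(1), where r = 1, simplified]
  have homeo: "topH p (H0rho p D (real p ^ n)) homeomorphic_space
      topH p (H0rho p (\<lambda>H. real p ^ n * D H) 1)" for n
    by (rule topH_homeomorphic_space_scale[OF c scale_bij])
  show ?thesis
    using bij_betw_H0rho_translate[OF assms(1,3)] scale_bij c covering_dim_homeomorphic[OF homeo]
    by (simp add: Let_def fun_eq_iff ereal_max_minus ereal_add_minus_commute ereal_mult_max
        ereal_mult_add)
qed

end
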